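(* The partial order $\unlhd$ on $(\mathbb{M}_{\mathrm{GHP}},d_{\mathrm{GHP}})$ is closed, i.e. its graph $\{(\mathcal{X},\mathcal{X}'):\mathcal{X}\unlhd\mathcal{X}'\}$ is closed in $\mathbb{M}_{\mathrm{GHP}}\times\mathbb{M}_{\mathrm{GHP}}$; equivalently, if $\mathcal{X}_n\to\mathcal{X}_\infty$, $\mathcal{X}'_n\to\mathcal{X}'_\infty$ and $\mathcal{X}_n\unlhd\mathcal{X}'_n$ for all $n$, then $\mathcal{X}_\infty\unlhd\mathcal{X}'_\infty$.
   Context: $\mathbb{M}_{\mathrm{GHP}}$ is the space of measure-preserving isometry classes of compact metric spaces with a finite Borel measure, with the Gromov--Hausdorff--Prokhorov metric $d_{\mathrm{GHP}}$ (infimum over common isometric embeddings of Hausdorff distance of images plus Prokhorov distance of pushed-forward measures). $[X,d,\mu]\unlhd[X',d',\mu']$ means there is a surjective map $\phi:X'\to X$ with $d(\phi(x'),\phi(y'))\le d'(x',y')$ for all $x',y'\in X'$ and $\mu(A)\le\mu'(\phi^{-1}(A))$ for all Borel $A\subset X$. *)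

theory Defs
  imports "HOL-Analysis.Analysis"
begin

text \<open>A (representative of a) compact metric measure space: carrier X, metric d on X,
  finite Borel measure mu on X.  Isometry classes are not formed explicitly; all notions
  below are invariant under measure-preserving isometries.\<close>
type_synonym 'a mms = "'a set \<times> ('a \<Rightarrow> 'a \<Rightarrow> real) \<times> 'a measure"

definition mborel :: "'a set \<Rightarrow> ('a \<Rightarrow> 'a \<Rightarrow> real) \<Rightarrow> 'a measure" where
  "mborel X d = sigma X {U. openin (Metric_space.mtopology X d) U}"

definition is_mms :: "'a mms \<Rightarrow> bool" where
  "is_mms S \<longleftrightarrow> (case S of (X, d, \<mu>) \<Rightarrow>
     Metric_space X d \<and> compact_space (Metric_space.mtopology X d) \<and>
     finite_measure \<mu> \<and> space \<mu> = X \<and> sets \<mu> = sets (mborel X d))"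

definition nbhd :: "'z set \<Rightarrow> ('z \<Rightarrow> 'z \<Rightarrow> real) \<Rightarrow> 'z set \<Rightarrow> real \<Rightarrow> 'z set" where
  "nbhd Z dZ A \<epsilon> = {z \<in> Z. \<exists>a\<in>A. dZ z a < \<epsilon>}"

text \<open>Hausdorff distance between subsets A, B of (Z,dZ) (infinite if no epsilon works).\<close>
definition hausdorff_dist :: "'z set \<Rightarrow> ('z \<Rightarrow> 'z \<Rightarrow> real) \<Rightarrow> 'z set \<Rightarrow> 'z set \<Rightarrow> ereal" where
  "hausdorff_dist Z dZ A B =
     Inf {ereal \<epsilon> | \<epsilon>. \<epsilon> > 0 \<and> A \<subseteq> nbhd Z dZ B \<epsilon> \<and> B \<subseteq> nbhd Z dZ A \<epsilon>}"

definition prokhorov_dist :: "'z set \<Rightarrow> ('z \<Rightarrow> 'z \<Rightarrow> real) \<Rightarrow> 'z measure \<Rightarrow> 'z measure \<Rightarrow> ereal" where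
  "prokhorov_dist Z dZ \<mu> \<nu> =
     Inf {ereal \<epsilon> | \<epsilon>. \<epsilon> > 0 \<and>
        (\<forall>A \<in> sets (mborel Z dZ).
           measure \<mu> A \<le> measure \<nu> (nbhd Z dZ A \<epsilon>) + \<epsilon> \<and>
           measure \<nu> A \<le> measure \<mu> (nbhd Z dZ A \<epsilon>) + \<epsilon>)}"

definition isometric_embedding ::
  "'a set \<Rightarrow> ('a \<Rightarrow> 'a \<Rightarrow> real) \<Rightarrow> 'z set \<Rightarrow> ('z \<Rightarrow> 'z \<Rightarrow> real) \<Rightarrow> ('a \<Rightarrow> 'z) \<Rightarrow> bool" where
  "isometric_embedding X d Z dZ \<phi> \<longleftrightarrow>
     \<phi> \<in> X \<rightarrow> Z \<and> (\<forall>x\<in>X. \<forall>y\<in>X. dZ (\<phi> x) (\<phi> y) = d x y)"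

text \<open>Since the union of the two images has cardinality at most that
  of the disjoint union of the carriers, it suffices to let Z range over subsets of the
  type 'a + 'a.\<close>
definition dGHP :: "'a mms \<Rightarrow> 'a mms \<Rightarrow> ereal" where
  "dGHP S S' = (case S of (X, d, \<mu>) \<Rightarrow> case S' of (X', d', \<mu>') \<Rightarrow>
     Inf {hausdorff_dist Z dZ (\<phi> ` X) (\<phi>' ` X')
            + prokhorov_dist Z dZ (distr \<mu> (mborel Z dZ) \<phi>) (distr \<mu>' (mborel Z dZ) \<phi>')
          | (Z :: ('a + 'a) set) dZ \<phi> \<phi>'. Metric_space Z dZ \<and>
             isometric_embedding X d Z dZ \<phi> \<and> isometric_embedding X' d' Z dZ \<phi>'})"

definition mms_le :: "'a mms \<Rightarrow> 'a mms \<Rightarrow> bool" where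
  "mms_le S S' = (case S of (X, d, \<mu>) \<Rightarrow> case S' of (X', d', \<mu>') \<Rightarrow>
     (\<exists>\<phi>. \<phi> ` X' = X \<and> (\<forall>x\<in>X'. \<forall>y\<in>X'. d (\<phi> x) (\<phi> y) \<le> d' x y) \<and>
          (\<forall>A \<in> sets \<mu>. emeasure \<mu> A \<le> emeasure \<mu>' (\<phi> -` A \<inter> X'))))"

end

theory Submission
  imports Defs
begin

text \<open>Write \<open>\<X>\<^sub>n = (X\<^sub>n, d\<^sub>n, \<mu>\<^sub>n) \<unlhd> \<Y>\<^sub>n = (Y\<^sub>n, e\<^sub>n, \<nu>\<^sub>n)\<close> with limits
  \<open>(X, d, \<mu>)\<close> and \<open>(Y, e, \<nu>)\<close>. Realise \<open>d\<^sub>G\<^sub>H\<^sub>P < \<epsilon>\<close> by common isometric embeddings;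
  lifting a point of \<open>Y\<close> to a nearby point of \<open>Y\<^sub>n\<close>, applying the witness of
  \<open>\<X>\<^sub>n \<unlhd> \<Y>\<^sub>n\<close> and moving to a nearby point of \<open>X\<close> gives a map \<open>f : Y \<rightarrow> X\<close> that is
  nonexpansive, onto and measure-increasing up to an error \<open>4\<epsilon>\<close>. As \<open>X\<close> is compact, these maps
  for \<open>\<epsilon> \<rightarrow> 0\<close> have a cluster point \<open>\<phi>\<close> in the Tychonoff product \<open>X\<^sup>Y\<close>. Pointwise
  clustering makes \<open>\<phi>\<close> nonexpansive, and then total boundedness of \<open>Y\<close> upgrades it to
  clustering in the uniform distance; this yields surjectivity and
  \<open>\<mu> F \<le> \<nu> (\<phi>\<^sup>-\<^sup>1 F)\<close> for closed \<open>F\<close>, and inner regularity of \<open>\<mu>\<close> by closed sets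
  extends the inequality to all Borel sets.\<close>

section \<open>Neighbourhoods and nonexpansive maps\<close>

lemma opens_subset_Pow:
  "Metric_space X d \<Longrightarrow> {U. openin (Metric_space.mtopology X d) U} \<subseteq> Pow X"
  using openin_subset Metric_space.topspace_mtopology by fastforce

lemma sets_mborel:
  "Metric_space X d \<Longrightarrow> sets (mborel X d) = sigma_sets X {U. openin (Metric_space.mtopology X d) U}"
  unfolding mborel_def by (rule sets_measure_of[OF opens_subset_Pow])

lemma mborel_openin:
  "Metric_space X d \<Longrightarrow> openin (Metric_space.mtopology X d) U \<Longrightarrow> U \<in> sets (mborel X d)"
  by (simp add: sets_mborel)

lemma nbhd_mono: "r \<le> s \<Longrightarrow> nbhd Z dZ S r \<subseteq> nbhd Z dZ S s"
  unfolding nbhd_def by force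

lemma openin_nbhd:
  assumes "Metric_space Z dZ" "S \<subseteq> Z"
  shows "openin (Metric_space.mtopology Z dZ) (nbhd Z dZ S r)"
proof -
  interpret Metric_space Z dZ by fact
  have "\<exists>\<rho>>0. mball z \<rho> \<subseteq> nbhd Z dZ S r" if z: "z \<in> nbhd Z dZ S r" for z
  proof -
    obtain s where s: "s \<in> S" "dZ z s < r" "z \<in> Z" using z by (auto simp: nbhd_def)
    have "w \<in> nbhd Z dZ S r" if w: "w \<in> mball z (r - dZ z s)" for w
    proof -
      have "dZ w s \<le> dZ z w + dZ z s" using triangle[of w z s] commute[of w z] w s assms(2) by auto
      then show ?thesis using w s unfolding nbhd_def by (auto intro!: bexI[of _ s])
    qed
    then show ?thesis using s(2) by (intro exI[of _ "r - dZ z s"]) auto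
  qed
  then show ?thesis unfolding openin_mtopology nbhd_def by auto
qed

lemma subset_nbhd: "S \<subseteq> Z \<Longrightarrow> Metric_space Z dZ \<Longrightarrow> r > 0 \<Longrightarrow> S \<subseteq> nbhd Z dZ S r"
  unfolding nbhd_def by (force simp: Metric_space.mdist_zero)

lemma nbhd_nbhd_subset:
  assumes "Metric_space Z dZ" "S \<subseteq> Z"
  shows "nbhd Z dZ (nbhd Z dZ S r) s \<subseteq> nbhd Z dZ S (r + s)"
proof
  fix z assume "z \<in> nbhd Z dZ (nbhd Z dZ S r) s"
  then obtain w a where "z \<in> Z" "w \<in> Z" "dZ z w < s" "a \<in> S" "dZ w a < r"
    unfolding nbhd_def by auto
  moreover have "dZ z a \<le> dZ z w + dZ w a"
    using Metric_space.triangle[OF assms(1)] calculation assms(2) by blast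
  ultimately show "z \<in> nbhd Z dZ S (r + s)" unfolding nbhd_def by force
qed

lemma closedin_eq_INT_nbhd:
  assumes "Metric_space X d" and F: "closedin (Metric_space.mtopology X d) F"
  shows "(\<Inter>k. nbhd X d F (inverse (real (Suc k)))) = F"
proof
  interpret Metric_space X d by fact
  have FX: "F \<subseteq> X" using closedin_subset[OF F] by simp
  show "F \<subseteq> (\<Inter>k. nbhd X d F (inverse (real (Suc k))))"
    using subset_nbhd[OF FX assms(1)] by (simp add: INT_greatest)
  show "(\<Inter>k. nbhd X d F (inverse (real (Suc k)))) \<subseteq> F"
  proof
    fix x assume x: "x \<in> (\<Inter>k. nbhd X d F (inverse (real (Suc k))))"
    then have "x \<in> X" by (auto simp: nbhd_def)
    show "x \<in> F"
    proof (rule ccontr)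
      assume "x \<notin> F"
      moreover have "openin mtopology (X - F)" using F by (simp add: closedin_def)
      ultimately obtain r where r: "r > 0" "mball x r \<subseteq> X - F"
        using \<open>x \<in> X\<close> unfolding openin_mtopology by blast
      obtain k where k: "inverse (real (Suc k)) < r" using reals_Archimedean[OF r(1)] by blast
      obtain a where "a \<in> F" "d x a < inverse (real (Suc k))" using x by (auto simp: nbhd_def)
      then have "a \<in> mball x r" using k FX \<open>x \<in> X\<close> by auto
      then show False using r(2) \<open>a \<in> F\<close> by blast
    qed
  qed
qed

lemma openin_eq_incseq_UN_closedin:
  assumes "Metric_space X d" and U: "openin (Metric_space.mtopology X d) U"
  shows "\<exists>F. incseq F \<and> (\<forall>k. closedin (Metric_space.mtopology X d) (F k)) \<and> (\<Union>k. F k) = U"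
proof -
  interpret Metric_space X d by fact
  define F where "F k = X - nbhd X d (X - U) (inverse (real (Suc k)))" for k
  have "closedin mtopology (F k)" for k
  proof -
    have "X - F k = nbhd X d (X - U) (inverse (real (Suc k)))" unfolding F_def nbhd_def by blast
    then show ?thesis
      using openin_nbhd[OF assms(1), of "X - U"] unfolding closedin_def F_def by simp
  qed
  moreover have "incseq F"
  proof (rule incseq_SucI)
    fix k
    have "inverse (real (Suc (Suc k))) \<le> inverse (real (Suc k))" by (simp add: field_simps)
    then have "nbhd X d (X - U) (inverse (real (Suc (Suc k)))) \<subseteq> nbhd X d (X - U) (inverse (real (Suc k)))"
      by (rule nbhd_mono)
    then show "F k \<subseteq> F (Suc k)" unfolding F_def by blast
  qed
  moreover have "(\<Union>k. F k) = U"
  proof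
    show "(\<Union>k. F k) \<subseteq> U"
    proof
      fix x assume "x \<in> (\<Union>k. F k)"
      then obtain k where "x \<in> X" "\<forall>a\<in>X - U. \<not> d x a < inverse (real (Suc k))"
        unfolding F_def nbhd_def by blast
      moreover have "d x x < inverse (real (Suc k))" using \<open>x \<in> X\<close> by simp
      ultimately show "x \<in> U" by blast
    qed
    show "U \<subseteq> (\<Union>k. F k)"
    proof
      fix x assume "x \<in> U"
      then obtain r where r: "r > 0" "mball x r \<subseteq> U" "x \<in> X"
        using U openin_mtopology by blast
      obtain k where k: "inverse (real (Suc k)) < r" using reals_Archimedean[OF r(1)] by blast
      have "\<not> d x a < inverse (real (Suc k))" if a: "a \<in> X - U" for a
      proof
        assume "d x a < inverse (real (Suc k))"
        then have "a \<in> mball x r" using r(3) k a by simp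
        then show False using r(2) a by blast
      qed
      then have "x \<in> F k" using r(3) unfolding F_def nbhd_def by blast
      then show "x \<in> (\<Union>k. F k)" by blast
    qed
  qed
  ultimately show ?thesis by blast
qed

definition nonexpansive :: "'a set \<Rightarrow> ('a \<Rightarrow> 'a \<Rightarrow> real) \<Rightarrow> 'b set \<Rightarrow> ('b \<Rightarrow> 'b \<Rightarrow> real) \<Rightarrow> ('a \<Rightarrow> 'b) \<Rightarrow> bool" where
  "nonexpansive X d Y e f \<longleftrightarrow> f \<in> X \<rightarrow> Y \<and> (\<forall>x\<in>X. \<forall>x'\<in>X. e (f x) (f x') \<le> d x x')"

lemma isometric_embedding_imp_nonexpansive:
  "isometric_embedding X d Z dZ \<psi> \<Longrightarrow> nonexpansive X d Z dZ \<psi>"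
  unfolding isometric_embedding_def nonexpansive_def by auto

lemma openin_nonexpansive_preimage:
  assumes "Metric_space X d" "Metric_space Y e" "nonexpansive X d Y e f"
    "openin (Metric_space.mtopology Y e) U"
  shows "openin (Metric_space.mtopology X d) (f -` U \<inter> X)"
proof -
  interpret X: Metric_space X d by fact
  interpret Y: Metric_space Y e by fact
  have "X.mball x r \<subseteq> f -` U \<inter> X" if "x \<in> X" "Y.mball (f x) r \<subseteq> U" for x r
    using that assms(3) unfolding nonexpansive_def by fastforce
  then show ?thesis
    using assms(4) unfolding X.openin_mtopology Y.openin_mtopology by blast
qed

lemma continuous_map_nonexpansive:
  assumes "Metric_space X d" "Metric_space Y e" "nonexpansive X d Y e f"
  shows "continuous_map (Metric_space.mtopology X d) (Metric_space.mtopology Y e) f"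
proof -
  have "{x \<in> X. f x \<in> U} = f -` U \<inter> X" for U by auto
  then show ?thesis
    using openin_nonexpansive_preimage[OF assms] assms(3)
    unfolding continuous_map_def nonexpansive_def
    by (simp add: Metric_space.topspace_mtopology[OF assms(1)] Metric_space.topspace_mtopology[OF assms(2)])
qed

lemma measurable_nonexpansive:
  assumes "Metric_space X d" "Metric_space Y e" "nonexpansive X d Y e f"
    "space M = X" "sets M = sets (mborel X d)"
  shows "f \<in> measurable M (mborel Y e)"
  unfolding mborel_def
proof (rule measurable_measure_of[OF opens_subset_Pow[OF assms(2)]])
  show "f \<in> space M \<rightarrow> Y" using assms(3,4) by (simp add: nonexpansive_def)
  fix U assume "U \<in> {U. openin (Metric_space.mtopology Y e) U}"
  then show "f -` U \<inter> space M \<in> sets M"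
    using openin_nonexpansive_preimage[OF assms(1-3)] mborel_openin[OF assms(1)] assms(4,5) by simp
qed

lemma is_mmsD:
  assumes "is_mms (X, d, \<mu>)"
  shows "Metric_space X d" "finite_measure \<mu>" "space \<mu> = X" "sets \<mu> = sets (mborel X d)"
    "compact_space (Metric_space.mtopology X d)"
  using assms unfolding is_mms_def by auto

lemma is_mms_openin_sets:
  "is_mms (X, d, \<mu>) \<Longrightarrow> openin (Metric_space.mtopology X d) U \<Longrightarrow> U \<in> sets \<mu>"
  using mborel_openin is_mmsD(1,4) by metis

lemma is_mms_nonexpansive_preimage_nbhd_sets:
  assumes "is_mms (X, d, \<mu>)" "Metric_space Z dZ" "nonexpansive X d Z dZ \<psi>" "S \<subseteq> Z"
  shows "\<psi> -` nbhd Z dZ S r \<inter> X \<in> sets \<mu>"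
  by (rule is_mms_openin_sets[OF assms(1) openin_nonexpansive_preimage[OF is_mmsD(1)[OF assms(1)]
        assms(2,3) openin_nbhd[OF assms(2,4)]]])

section \<open>Inner regularity by closed sets\<close>

lemma (in finite_measure) measure_UN_le_UN_plus_sums:
  fixes F U :: "nat \<Rightarrow> 'a set"
  assumes F: "range F \<subseteq> sets M" and U: "range U \<subseteq> sets M" and FU: "\<And>i. F i \<subseteq> U i"
    and gap: "\<And>i. measure M (U i) \<le> measure M (F i) + c i" and c: "c sums s"
  shows "measure M (\<Union>i. U i) \<le> measure M (\<Union>i. F i) + s"
proof -
  have D: "range (\<lambda>i. U i - F i) \<subseteq> sets M" using F U by auto
  have D_le: "measure M (U i - F i) \<le> c i" for i
  proof -
    have "measure M (U i - F i) = measure M (U i) - measure M (F i)"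
      using finite_measure_Diff F U FU by auto
    then show ?thesis using gap[of i] by linarith
  qed
  have D_summable: "summable (\<lambda>i. measure M (U i - F i))"
    by (rule summable_comparison_test[OF _ sums_summable[OF c]]) (use D_le in auto)
  have "measure M (\<Union>i. U i) \<le> measure M ((\<Union>i. F i) \<union> (\<Union>i. U i - F i))"
    by (rule finite_measure_mono) (use F D in auto)
  moreover have "\<dots> \<le> measure M (\<Union>i. F i) + measure M (\<Union>i. U i - F i)"
    by (rule measure_Un_le) (use F D in auto)
  moreover have "measure M (\<Union>i. U i - F i) \<le> (\<Sum>i. measure M (U i - F i))"
    by (rule finite_measure_subadditive_countably[OF D D_summable])
  moreover have "(\<Sum>i. measure M (U i - F i)) \<le> s"
    using suminf_le[OF D_le D_summable sums_summable[OF c]] sums_unique[OF c] by simp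
  ultimately show ?thesis by linarith
qed

lemma (in finite_measure) measure_UN_le_finite_UN_plus:
  fixes F :: "nat \<Rightarrow> 'a set"
  assumes "range F \<subseteq> sets M" "\<eta> > 0"
  shows "\<exists>N. measure M (\<Union>i. F i) \<le> measure M (\<Union>i<N. F i) + \<eta>"
proof -
  have "(\<Union>N. \<Union>i<N. F i) = (\<Union>i. F i)"
    by auto
  moreover have "(\<lambda>N. measure M (\<Union>i<N. F i)) \<longlonglongrightarrow> measure M (\<Union>N. \<Union>i<N. F i)"
    by (rule finite_Lim_measure_incseq) (use assms(1) in \<open>auto simp: incseq_def intro: order.strict_trans2\<close>)
  ultimately have "(\<lambda>N. measure M (\<Union>i<N. F i)) \<longlonglongrightarrow> measure M (\<Union>i. F i)" by simp
  from order_tendstoD(1)[OF this, of "measure M (\<Union>i. F i) - \<eta>"]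
  have "\<forall>\<^sub>F N in sequentially. measure M (\<Union>i. F i) - \<eta> < measure M (\<Union>i<N. F i)"
    using assms(2) by simp
  then obtain N where "measure M (\<Union>i. F i) - \<eta> < measure M (\<Union>i<N. F i)"
    unfolding eventually_sequentially by blast
  then show ?thesis by (intro exI[of _ N]) simp
qed

definition closed_open_approximable :: "'a set \<Rightarrow> ('a \<Rightarrow> 'a \<Rightarrow> real) \<Rightarrow> 'a measure \<Rightarrow> 'a set \<Rightarrow> bool" where
  "closed_open_approximable X d \<mu> A \<longleftrightarrow> A \<subseteq> X \<and>
     (\<forall>\<delta>>0. \<exists>F U. closedin (Metric_space.mtopology X d) F \<and> openin (Metric_space.mtopology X d) U \<and>
        F \<subseteq> A \<and> A \<subseteq> U \<and> measure \<mu> U \<le> measure \<mu> F + \<delta>)"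

context
  fixes X :: "'a set" and d \<mu>
  assumes X: "Metric_space X d" and \<mu>: "finite_measure \<mu>"
    and space_\<mu>: "space \<mu> = X" and sets_\<mu>: "sets \<mu> = sets (mborel X d)"
begin

interpretation Metric_space X d by (rule X)
interpretation finite_measure \<mu> by (rule \<mu>)

lemma mborel_measure_openin: "openin mtopology U \<Longrightarrow> U \<in> sets \<mu>"
  using mborel_openin[OF X] sets_\<mu> by simp

lemma mborel_measure_closedin:
  assumes "closedin mtopology F"
  shows "F \<in> sets \<mu>"
proof -
  have "X - (X - F) \<in> sets \<mu>"
    using mborel_measure_openin[of "X - F"] sets.compl_sets[of "X - F" \<mu>] assms space_\<mu> by (simp add: closedin_def)
  then show ?thesis using closedin_subset[OF assms] by (simp add: double_diff)
qed

lemma closed_open_approximable_openin: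
  assumes U: "openin mtopology U"
  shows "closed_open_approximable X d \<mu> U"
  unfolding closed_open_approximable_def
proof (intro conjI allI impI)
  show "U \<subseteq> X" using openin_subset[OF U] by simp
  fix \<delta> :: real assume "\<delta> > 0"
  obtain F where F: "incseq F" "\<And>k. closedin mtopology (F k)" "(\<Union>k. F k) = U"
    using openin_eq_incseq_UN_closedin[OF X U] by blast
  have "(\<lambda>k. measure \<mu> (F k)) \<longlonglongrightarrow> measure \<mu> U"
    using finite_Lim_measure_incseq[of F] F mborel_measure_closedin by auto
  from order_tendstoD(1)[OF this, of "measure \<mu> U - \<delta>"] \<open>\<delta> > 0\<close>
  obtain k where "measure \<mu> U - \<delta> < measure \<mu> (F k)"
    by (auto simp: eventually_sequentially)
  then show "\<exists>F' U'. closedin mtopology F' \<and> openin mtopology U' \<and> F' \<subseteq> U \<and> U \<subseteq> U' \<and>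
      measure \<mu> U' \<le> measure \<mu> F' + \<delta>"
    using F U by (intro exI[of _ "F k"] exI[of _ U]) auto
qed

lemma closed_open_approximable_Diff:
  assumes "closed_open_approximable X d \<mu> A"
  shows "closed_open_approximable X d \<mu> (X - A)"
  unfolding closed_open_approximable_def
proof (intro conjI allI impI)
  fix \<delta> :: real assume "\<delta> > 0"
  then obtain F U where FU: "closedin mtopology F" "openin mtopology U" "F \<subseteq> A" "A \<subseteq> U"
    "measure \<mu> U \<le> measure \<mu> F + \<delta>"
    using assms unfolding closed_open_approximable_def by blast
  have "measure \<mu> (X - F) = measure \<mu> X - measure \<mu> F" "measure \<mu> (X - U) = measure \<mu> X - measure \<mu> U"
    using finite_measure_compl mborel_measure_closedin[OF FU(1)] mborel_measure_openin[OF FU(2)] space_\<mu> by auto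
  moreover have "closedin mtopology (X - U)" "openin mtopology (X - F)"
    using FU(1,2) openin_subset[OF FU(2)] by (auto simp: closedin_def Diff_Diff_Int inf.absorb2)
  ultimately show "\<exists>F' U'. closedin mtopology F' \<and> openin mtopology U' \<and> F' \<subseteq> X - A \<and> X - A \<subseteq> U' \<and>
      measure \<mu> U' \<le> measure \<mu> F' + \<delta>"
    using FU(3-5) by (intro exI[of _ "X - U"] exI[of _ "X - F"]) auto
qed auto

lemma closed_open_approximable_UN:
  assumes A: "\<And>i::nat. closed_open_approximable X d \<mu> (A i)"
  shows "closed_open_approximable X d \<mu> (\<Union>i. A i)"
  unfolding closed_open_approximable_def
proof (intro conjI allI impI)
  show "(\<Union>i. A i) \<subseteq> X" using A unfolding closed_open_approximable_def by blast
  fix \<delta> :: real assume "\<delta> > 0"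
  define c where "c i = \<delta> / 2 * (1/2) ^ Suc i" for i
  have c: "c sums (\<delta> / 2)" unfolding c_def using sums_mult[OF power_half_series, of "\<delta> / 2"] by simp
  have "\<forall>i. \<exists>F U. closedin mtopology F \<and> openin mtopology U \<and> F \<subseteq> A i \<and> A i \<subseteq> U \<and>
      measure \<mu> U \<le> measure \<mu> F + c i"
    using A \<open>\<delta> > 0\<close> unfolding closed_open_approximable_def c_def by simp
  then obtain F U where FU: "\<And>i. closedin mtopology (F i)" "\<And>i. openin mtopology (U i)"
    "\<And>i. F i \<subseteq> A i" "\<And>i. A i \<subseteq> U i" "\<And>i. measure \<mu> (U i) \<le> measure \<mu> (F i) + c i"
    by metis
  have sets: "range F \<subseteq> sets \<mu>" "range U \<subseteq> sets \<mu>" using FU(1,2) mborel_measure_closedin mborel_measure_openin by auto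
  obtain N where N: "measure \<mu> (\<Union>i. F i) \<le> measure \<mu> (\<Union>i<N. F i) + \<delta> / 2"
    using measure_UN_le_finite_UN_plus[OF sets(1)] \<open>\<delta> > 0\<close> by (metis half_gt_zero)
  have "measure \<mu> (\<Union>i. U i) \<le> measure \<mu> (\<Union>i. F i) + \<delta> / 2"
    by (rule measure_UN_le_UN_plus_sums[OF sets _ FU(5) c]) (use FU(3,4) in blast)
  then have "measure \<mu> (\<Union>i. U i) \<le> measure \<mu> (\<Union>i<N. F i) + \<delta>" using N by simp
  moreover have "closedin mtopology (\<Union>i<N. F i)" using FU(1) by (intro closedin_Union) auto
  moreover have "openin mtopology (\<Union>i. U i)" using FU(2) by auto
  ultimately show "\<exists>F' U'. closedin mtopology F' \<and> openin mtopology U' \<and> F' \<subseteq> (\<Union>i. A i) \<and>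
      (\<Union>i. A i) \<subseteq> U' \<and> measure \<mu> U' \<le> measure \<mu> F' + \<delta>"
    using FU(3,4) by (intro exI[of _ "\<Union>i<N. F i"] exI[of _ "\<Union>i. U i"]) blast
qed

lemma closedin_inner_regular:
  assumes "A \<in> sets \<mu>" "\<delta> > 0"
  shows "\<exists>F. closedin mtopology F \<and> F \<subseteq> A \<and> measure \<mu> A \<le> measure \<mu> F + \<delta>"
proof -
  have "A \<in> sigma_sets X {U. openin mtopology U}" using assms(1) sets_\<mu> sets_mborel[OF X] by simp
  then have "closed_open_approximable X d \<mu> A"
  proof (induction rule: sigma_sets.induct)
    case (Basic U)
    then show ?case by (simp add: closed_open_approximable_openin)
  next
    case Empty
    show ?case using closed_open_approximable_openin[of "{}"] by simp
  next
    case (Compl A)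
    show ?case using Compl.IH by (rule closed_open_approximable_Diff)
  next
    case (Union A)
    show ?case using Union.IH by (rule closed_open_approximable_UN)
  qed
  then obtain F U where F: "closedin mtopology F" "F \<subseteq> A"
    and U: "openin mtopology U" "A \<subseteq> U" "measure \<mu> U \<le> measure \<mu> F + \<delta>"
    using assms(2) unfolding closed_open_approximable_def by blast
  have "measure \<mu> A \<le> measure \<mu> U" using finite_measure_mono[OF U(2) mborel_measure_openin[OF U(1)]] .
  then show ?thesis using F U(3) by force
qed

end

section \<open>Couplings and approximate order witnesses\<close>

text \<open>What \<open>d\<^sub>G\<^sub>H\<^sub>P < \<epsilon>\<close> provides, with the Prokhorov condition pulled back from the
  pushforward measures on \<open>Z\<close> to the spaces themselves.\<close>
definition ghp_coupling ::
  "'a set \<Rightarrow> ('a \<Rightarrow> 'a \<Rightarrow> real) \<Rightarrow> 'a measure \<Rightarrow> 'b set \<Rightarrow> ('b \<Rightarrow> 'b \<Rightarrow> real) \<Rightarrow> 'b measure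
    \<Rightarrow> 'z set \<Rightarrow> ('z \<Rightarrow> 'z \<Rightarrow> real) \<Rightarrow> ('a \<Rightarrow> 'z) \<Rightarrow> ('b \<Rightarrow> 'z) \<Rightarrow> real \<Rightarrow> bool" where
  "ghp_coupling X d \<mu> X' d' \<mu>' Z dZ \<psi> \<psi>' \<epsilon> \<longleftrightarrow> Metric_space Z dZ \<and>
     isometric_embedding X d Z dZ \<psi> \<and> isometric_embedding X' d' Z dZ \<psi>' \<and>
     (\<forall>x\<in>X. \<exists>x'\<in>X'. dZ (\<psi> x) (\<psi>' x') < \<epsilon>) \<and>
     (\<forall>x'\<in>X'. \<exists>x\<in>X. dZ (\<psi> x) (\<psi>' x') < \<epsilon>) \<and>
     (\<forall>A\<in>sets \<mu>. measure \<mu> A \<le> measure \<mu>' {x'\<in>X'. \<exists>x\<in>A. dZ (\<psi> x) (\<psi>' x') < \<epsilon>} + \<epsilon>) \<and>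
     (\<forall>A'\<in>sets \<mu>'. measure \<mu>' A' \<le> measure \<mu> {x\<in>X. \<exists>x'\<in>A'. dZ (\<psi> x) (\<psi>' x') < \<epsilon>} + \<epsilon>)"

lemma ghp_couplingD:
  assumes "ghp_coupling X d \<mu> X' d' \<mu>' Z dZ \<psi> \<psi>' \<epsilon>"
  shows "Metric_space Z dZ" "isometric_embedding X d Z dZ \<psi>" "isometric_embedding X' d' Z dZ \<psi>'"
    and "x \<in> X \<Longrightarrow> \<exists>x'\<in>X'. dZ (\<psi> x) (\<psi>' x') < \<epsilon>"
    and "x' \<in> X' \<Longrightarrow> \<exists>x\<in>X. dZ (\<psi> x) (\<psi>' x') < \<epsilon>"
    and "A \<in> sets \<mu> \<Longrightarrow> measure \<mu> A \<le> measure \<mu>' {x'\<in>X'. \<exists>x\<in>A. dZ (\<psi> x) (\<psi>' x') < \<epsilon>} + \<epsilon>"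
    and "A' \<in> sets \<mu>' \<Longrightarrow> measure \<mu>' A' \<le> measure \<mu> {x\<in>X. \<exists>x'\<in>A'. dZ (\<psi> x) (\<psi>' x') < \<epsilon>} + \<epsilon>"
  using assms unfolding ghp_coupling_def by blast+

lemma prokhorov_bound_pullback:
  assumes m: "is_mms (X, d, \<mu>)" and m': "is_mms (X', d', \<mu>')" and Z: "Metric_space Z dZ"
    and iso: "isometric_embedding X d Z dZ \<psi>" and iso': "isometric_embedding X' d' Z dZ \<psi>'"
    and prok: "\<forall>B\<in>sets (mborel Z dZ). measure (distr \<mu> (mborel Z dZ) \<psi>) B
              \<le> measure (distr \<mu>' (mborel Z dZ) \<psi>') (nbhd Z dZ B \<epsilon>') + \<epsilon>'"
    and "\<epsilon>' < \<epsilon>" and A: "A \<in> sets \<mu>"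
  shows "measure \<mu> A \<le> measure \<mu>' {x'\<in>X'. \<exists>x\<in>A. dZ (\<psi> x) (\<psi>' x') < \<epsilon>} + \<epsilon>"
proof -
  note X = is_mmsD[OF m] and X' = is_mmsD[OF m']
  interpret finite_measure \<mu> by (rule X(2))
  interpret \<mu>': finite_measure \<mu>' by (rule X'(2))
  have ne: "nonexpansive X d Z dZ \<psi>" "nonexpansive X' d' Z dZ \<psi>'"
    using iso iso' by (simp_all add: isometric_embedding_imp_nonexpansive)
  have AZ: "\<psi> ` A \<subseteq> Z"
    using sets.sets_into_space[OF A] X(3) iso by (auto simp: isometric_embedding_def)
  define B where "B = nbhd Z dZ (\<psi> ` A) (\<epsilon> - \<epsilon>')"
  have "B \<subseteq> Z" unfolding B_def nbhd_def by auto
  then have B: "B \<in> sets (mborel Z dZ)" "nbhd Z dZ B \<epsilon>' \<in> sets (mborel Z dZ)"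
    unfolding B_def using Z AZ by (auto intro!: mborel_openin openin_nbhd)
  have meas: "\<psi> \<in> measurable \<mu> (mborel Z dZ)" "\<psi>' \<in> measurable \<mu>' (mborel Z dZ)"
    using measurable_nonexpansive X X' Z ne by blast+
  have "A \<subseteq> \<psi> -` B \<inter> space \<mu>"
    using subset_nbhd[OF AZ Z, of "\<epsilon> - \<epsilon>'"] \<open>\<epsilon>' < \<epsilon>\<close> sets.sets_into_space[OF A]
    unfolding B_def by auto
  then have "measure \<mu> A \<le> measure (distr \<mu> (mborel Z dZ) \<psi>) B"
    using finite_measure_mono measurable_sets[OF meas(1) B(1)] measure_distr[OF meas(1) B(1)] by simp
  also have "\<dots> \<le> measure \<mu>' (\<psi>' -` nbhd Z dZ B \<epsilon>' \<inter> X') + \<epsilon>'"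
    using prok[rule_format, OF B(1)] measure_distr[OF meas(2) B(2)] X'(3) by simp
  also have "\<dots> \<le> measure \<mu>' {x'\<in>X'. \<exists>x\<in>A. dZ (\<psi> x) (\<psi>' x') < \<epsilon>} + \<epsilon>"
  proof -
    have "measure \<mu>' (\<psi>' -` nbhd Z dZ B \<epsilon>' \<inter> X') \<le> measure \<mu>' (\<psi>' -` nbhd Z dZ (\<psi> ` A) \<epsilon> \<inter> X')"
      using nbhd_nbhd_subset[OF Z AZ, of "\<epsilon> - \<epsilon>'" \<epsilon>'] is_mms_nonexpansive_preimage_nbhd_sets[OF m' Z ne(2) AZ]
      unfolding B_def by (intro \<mu>'.finite_measure_mono) auto
    moreover have "\<psi>' -` nbhd Z dZ (\<psi> ` A) \<epsilon> \<inter> X' = {x'\<in>X'. \<exists>x\<in>A. dZ (\<psi> x) (\<psi>' x') < \<epsilon>}"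
      using iso' AZ Metric_space.commute[OF Z]
      by (auto simp: nbhd_def isometric_embedding_def Pi_iff)
    ultimately show ?thesis using \<open>\<epsilon>' < \<epsilon>\<close> by simp
  qed
  finally show ?thesis .
qed

lemma Inf_ereal_pos_nonneg: "(0::ereal) \<le> Inf {ereal e | e. e > 0 \<and> P e}"
  by (rule Inf_greatest) auto

lemma dGHP_lessE:
  fixes X X' :: "'a set"
  assumes "dGHP (X, d, \<mu>) (X', d', \<mu>') < ereal \<epsilon>"
  obtains Z :: "('a + 'a) set" and dZ \<psi> \<psi>'
  where "Metric_space Z dZ" "isometric_embedding X d Z dZ \<psi>" "isometric_embedding X' d' Z dZ \<psi>'"
    and "hausdorff_dist Z dZ (\<psi> ` X) (\<psi>' ` X') < ereal \<epsilon>"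
    and "prokhorov_dist Z dZ (distr \<mu> (mborel Z dZ) \<psi>) (distr \<mu>' (mborel Z dZ) \<psi>') < ereal \<epsilon>"
proof -
  obtain Z :: "('a + 'a) set" and dZ \<psi> \<psi>' where
    Z: "Metric_space Z dZ" and iso: "isometric_embedding X d Z dZ \<psi>" "isometric_embedding X' d' Z dZ \<psi>'"
    and "hausdorff_dist Z dZ (\<psi> ` X) (\<psi>' ` X')
            + prokhorov_dist Z dZ (distr \<mu> (mborel Z dZ) \<psi>) (distr \<mu>' (mborel Z dZ) \<psi>') < ereal \<epsilon>"
    using assms unfolding dGHP_def by (auto simp: Inf_less_iff)
  moreover have "hausdorff_dist Z dZ (\<psi> ` X) (\<psi>' ` X') \<ge> 0"
    "prokhorov_dist Z dZ (distr \<mu> (mborel Z dZ) \<psi>) (distr \<mu>' (mborel Z dZ) \<psi>') \<ge> 0"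
    unfolding hausdorff_dist_def prokhorov_dist_def by (rule Inf_ereal_pos_nonneg)+
  ultimately show ?thesis
    using that by (metis add_increasing add_increasing2 order.refl order.strict_trans1)
qed

lemma dGHP_less_imp_ghp_coupling:
  fixes X X' :: "'a set"
  assumes m: "is_mms (X, d, \<mu>)" and m': "is_mms (X', d', \<mu>')"
    and "dGHP (X, d, \<mu>) (X', d', \<mu>') < ereal \<epsilon>"
  shows "\<exists>(Z :: ('a + 'a) set) dZ \<psi> \<psi>'. ghp_coupling X d \<mu> X' d' \<mu>' Z dZ \<psi> \<psi>' \<epsilon>"
proof -
  obtain Z :: "('a + 'a) set" and dZ \<psi> \<psi>' where
    Z: "Metric_space Z dZ" and iso: "isometric_embedding X d Z dZ \<psi>" "isometric_embedding X' d' Z dZ \<psi>'"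
    and "hausdorff_dist Z dZ (\<psi> ` X) (\<psi>' ` X') < ereal \<epsilon>"
    and "prokhorov_dist Z dZ (distr \<mu> (mborel Z dZ) \<psi>) (distr \<mu>' (mborel Z dZ) \<psi>') < ereal \<epsilon>"
    using dGHP_lessE[OF assms(3)] by blast
  then obtain h p where "h < \<epsilon>" "\<psi> ` X \<subseteq> nbhd Z dZ (\<psi>' ` X') h" "\<psi>' ` X' \<subseteq> nbhd Z dZ (\<psi> ` X) h"
    and "p < \<epsilon>"
    and prok1: "\<forall>A \<in> sets (mborel Z dZ). measure (distr \<mu> (mborel Z dZ) \<psi>) A
                  \<le> measure (distr \<mu>' (mborel Z dZ) \<psi>') (nbhd Z dZ A p) + p"
    and prok2: "\<forall>A \<in> sets (mborel Z dZ). measure (distr \<mu>' (mborel Z dZ) \<psi>') A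
                  \<le> measure (distr \<mu> (mborel Z dZ) \<psi>) (nbhd Z dZ A p) + p"
    unfolding hausdorff_dist_def prokhorov_dist_def by (auto simp: Inf_less_iff)
  have commute: "dZ (\<psi>' x') (\<psi> x) = dZ (\<psi> x) (\<psi>' x')" if "x \<in> X" "x' \<in> X'" for x x'
    using Metric_space.commute[OF Z] iso that by (auto simp: isometric_embedding_def)
  have "\<forall>x\<in>X. \<exists>x'\<in>X'. dZ (\<psi> x) (\<psi>' x') < h" "\<forall>x'\<in>X'. \<exists>x\<in>X. dZ (\<psi> x) (\<psi>' x') < h"
    using \<open>\<psi> ` X \<subseteq> _\<close> \<open>\<psi>' ` X' \<subseteq> _\<close> by (force simp: nbhd_def commute)+
  then have "\<forall>x\<in>X. \<exists>x'\<in>X'. dZ (\<psi> x) (\<psi>' x') < \<epsilon>" "\<forall>x'\<in>X'. \<exists>x\<in>X. dZ (\<psi> x) (\<psi>' x') < \<epsilon>"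
    using \<open>h < \<epsilon>\<close> by (meson less_trans)+
  moreover have "\<forall>A\<in>sets \<mu>. measure \<mu> A \<le> measure \<mu>' {x'\<in>X'. \<exists>x\<in>A. dZ (\<psi> x) (\<psi>' x') < \<epsilon>} + \<epsilon>"
    using prokhorov_bound_pullback[OF m m' Z iso prok1 \<open>p < \<epsilon>\<close>] by blast
  moreover have "\<forall>A'\<in>sets \<mu>'. measure \<mu>' A' \<le> measure \<mu> {x\<in>X. \<exists>x'\<in>A'. dZ (\<psi> x) (\<psi>' x') < \<epsilon>} + \<epsilon>"
  proof
    fix A' assume A': "A' \<in> sets \<mu>'"
    then have "{x\<in>X. \<exists>x'\<in>A'. dZ (\<psi>' x') (\<psi> x) < \<epsilon>} = {x\<in>X. \<exists>x'\<in>A'. dZ (\<psi> x) (\<psi>' x') < \<epsilon>}"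
      using sets.sets_into_space[OF A'] is_mmsD(3)[OF m'] commute by (metis (no_types, lifting) subsetD)
    then show "measure \<mu>' A' \<le> measure \<mu> {x\<in>X. \<exists>x'\<in>A'. dZ (\<psi> x) (\<psi>' x') < \<epsilon>} + \<epsilon>"
      using prokhorov_bound_pullback[OF m' m Z iso(2,1) prok2 \<open>p < \<epsilon>\<close> A'] by simp
  qed
  ultimately show ?thesis unfolding ghp_coupling_def using Z iso by blast
qed

lemma ghp_coupling_near_sets:
  assumes c: "ghp_coupling X d \<mu> X' d' \<mu>' Z dZ \<psi> \<psi>' \<epsilon>"
  shows "is_mms (X, d, \<mu>) \<Longrightarrow> A' \<subseteq> X' \<Longrightarrow> {x\<in>X. \<exists>x'\<in>A'. dZ (\<psi> x) (\<psi>' x') < \<epsilon>} \<in> sets \<mu>"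
    and "is_mms (X', d', \<mu>') \<Longrightarrow> A \<subseteq> X \<Longrightarrow> {x'\<in>X'. \<exists>x\<in>A. dZ (\<psi> x) (\<psi>' x') < \<epsilon>} \<in> sets \<mu>'"
proof -
  have Z: "Metric_space Z dZ" and iso: "isometric_embedding X d Z dZ \<psi>" "isometric_embedding X' d' Z dZ \<psi>'"
    using c by (auto simp: ghp_coupling_def)
  note ne = iso[THEN isometric_embedding_imp_nonexpansive]
  show "{x\<in>X. \<exists>x'\<in>A'. dZ (\<psi> x) (\<psi>' x') < \<epsilon>} \<in> sets \<mu>" if "is_mms (X, d, \<mu>)" "A' \<subseteq> X'"
  proof -
    have "{x\<in>X. \<exists>x'\<in>A'. dZ (\<psi> x) (\<psi>' x') < \<epsilon>} = \<psi> -` nbhd Z dZ (\<psi>' ` A') \<epsilon> \<inter> X"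
      using iso that(2) by (auto simp: nbhd_def isometric_embedding_def)
    moreover have "\<psi>' ` A' \<subseteq> Z" using iso(2) that(2) by (auto simp: isometric_embedding_def)
    ultimately show ?thesis using is_mms_nonexpansive_preimage_nbhd_sets[OF that(1) Z ne(1)] by simp
  qed
  show "{x'\<in>X'. \<exists>x\<in>A. dZ (\<psi> x) (\<psi>' x') < \<epsilon>} \<in> sets \<mu>'" if "is_mms (X', d', \<mu>')" "A \<subseteq> X"
  proof -
    have "{x'\<in>X'. \<exists>x\<in>A. dZ (\<psi> x) (\<psi>' x') < \<epsilon>} = \<psi>' -` nbhd Z dZ (\<psi> ` A) \<epsilon> \<inter> X'"
      using iso that(2) Metric_space.commute[OF Z] by (auto simp: nbhd_def isometric_embedding_def Pi_iff)
    moreover have "\<psi> ` A \<subseteq> Z" using iso(1) that(2) by (auto simp: isometric_embedding_def)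
    ultimately show ?thesis using is_mms_nonexpansive_preimage_nbhd_sets[OF that(1) Z ne(2)] by simp
  qed
qed

lemma isometric_embeddings_dist_less:
  assumes Z: "Metric_space Z dZ"
    and iso: "isometric_embedding X d Z dZ \<psi>" and iso': "isometric_embedding X' d' Z dZ \<psi>'"
    and "x \<in> X" "y \<in> X" "x' \<in> X'" "y' \<in> X'"
    and "dZ (\<psi> x) (\<psi>' x') < \<epsilon>" "dZ (\<psi> y) (\<psi>' y') < \<epsilon>"
  shows "d x y < d' x' y' + 2 * \<epsilon>" "d' x' y' < d x y + 2 * \<epsilon>"
proof -
  interpret Metric_space Z dZ by fact
  have in_Z: "\<psi> x \<in> Z" "\<psi> y \<in> Z" "\<psi>' x' \<in> Z" "\<psi>' y' \<in> Z"
    using iso iso' assms(4-7) by (auto simp: isometric_embedding_def)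
  have dist: "d x y = dZ (\<psi> x) (\<psi> y)" "d' x' y' = dZ (\<psi>' x') (\<psi>' y')"
    using iso iso' assms(4-7) by (auto simp: isometric_embedding_def)
  have "dZ (\<psi> x) (\<psi> y) \<le> dZ (\<psi> x) (\<psi>' x') + dZ (\<psi>' x') (\<psi>' y') + dZ (\<psi>' y') (\<psi> y)"
    "dZ (\<psi>' x') (\<psi>' y') \<le> dZ (\<psi>' x') (\<psi> x) + dZ (\<psi> x) (\<psi> y) + dZ (\<psi> y) (\<psi>' y')"
    using triangle in_Z by (meson add_right_mono order_trans)+
  then show "d x y < d' x' y' + 2 * \<epsilon>" "d' x' y' < d x y + 2 * \<epsilon>"
    using dist assms(8,9) commute[of "\<psi> x" "\<psi>' x'"] commute[of "\<psi> y" "\<psi>' y'"]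
    by linarith+
qed

text \<open>Such a map need not be measurable, so the measure inequality is only required for
  closed \<open>F\<close>, through a measurable \<open>K\<close> inside the preimage of the \<open>\<delta>\<close>-neighbourhood of \<open>F\<close>.\<close>
definition approx_le_map ::
  "'a set \<Rightarrow> ('a \<Rightarrow> 'a \<Rightarrow> real) \<Rightarrow> 'a measure \<Rightarrow> 'b set \<Rightarrow> ('b \<Rightarrow> 'b \<Rightarrow> real) \<Rightarrow> 'b measure
    \<Rightarrow> ('b \<Rightarrow> 'a) \<Rightarrow> real \<Rightarrow> bool" where
  "approx_le_map X d \<mu> Y e \<nu> f \<delta> \<longleftrightarrow> f \<in> Y \<rightarrow> X \<and>
     (\<forall>y\<in>Y. \<forall>y'\<in>Y. d (f y) (f y') \<le> e y y' + \<delta>) \<and>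
     (\<forall>x\<in>X. \<exists>y\<in>Y. d x (f y) \<le> \<delta>) \<and>
     (\<forall>F. closedin (Metric_space.mtopology X d) F \<longrightarrow>
        (\<exists>K\<in>sets \<nu>. K \<subseteq> f -` nbhd X d F \<delta> \<inter> Y \<and> measure \<mu> F \<le> measure \<nu> K + \<delta>))"

lemma approx_le_mapD:
  assumes "approx_le_map X d \<mu> Y e \<nu> f \<delta>"
  shows "y \<in> Y \<Longrightarrow> f y \<in> X"
    and "y \<in> Y \<Longrightarrow> y' \<in> Y \<Longrightarrow> d (f y) (f y') \<le> e y y' + \<delta>"
    and "x \<in> X \<Longrightarrow> \<exists>y\<in>Y. d x (f y) \<le> \<delta>"
    and "closedin (Metric_space.mtopology X d) F \<Longrightarrow>
           \<exists>K\<in>sets \<nu>. K \<subseteq> f -` nbhd X d F \<delta> \<inter> Y \<and> measure \<mu> F \<le> measure \<nu> K + \<delta>"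
  using assms unfolding approx_le_map_def by blast+

text \<open>The approximate witness is the transfer map \<open>near \<circ> \<phi> \<circ> lift : Y \<rightarrow> Y\<^sub>n \<rightarrow> X\<^sub>n \<rightarrow> X\<close>,
  where \<open>\<phi>\<close> witnesses \<open>X\<^sub>n \<unlhd> Y\<^sub>n\<close> and \<open>lift\<close>, \<open>near\<close> pick \<open>\<epsilon>\<close>-close points in the couplings.\<close>
context
  fixes X :: "'b set" and Y :: "'c set" and Xn Yn :: "'a set" and d e dn en \<mu> \<nu> \<mu>n \<nu>n
    and Z :: "'z set" and dZ \<psi> \<kappa> and Z' :: "'w set" and dZ' \<alpha> \<beta> and \<epsilon> :: real
    and \<phi> :: "'a \<Rightarrow> 'a" and lift :: "'c \<Rightarrow> 'a" and near :: "'a \<Rightarrow> 'b"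
  assumes mX: "is_mms (X, d, \<mu>)" and mY: "is_mms (Y, e, \<nu>)"
    and mXn: "is_mms (Xn, dn, \<mu>n)" and mYn: "is_mms (Yn, en, \<nu>n)"
    and cX: "ghp_coupling Xn dn \<mu>n X d \<mu> Z dZ \<psi> \<kappa> \<epsilon>"
    and cY: "ghp_coupling Yn en \<nu>n Y e \<nu> Z' dZ' \<alpha> \<beta> \<epsilon>"
    and \<phi>_onto: "\<phi> ` Yn = Xn" and \<phi>_ne: "nonexpansive Yn en Xn dn \<phi>"
    and \<phi>_meas: "\<forall>A\<in>sets \<mu>n. emeasure \<mu>n A \<le> emeasure \<nu>n (\<phi> -` A \<inter> Yn)"
    and lift: "\<And>y. y \<in> Y \<Longrightarrow> lift y \<in> Yn \<and> dZ' (\<alpha> (lift y)) (\<beta> y) < \<epsilon>"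
    and near: "\<And>x. x \<in> Xn \<Longrightarrow> near x \<in> X \<and> dZ (\<psi> x) (\<kappa> (near x)) < \<epsilon>"
    and "0 \<le> \<epsilon>"
begin

lemma transfer_lift_image_in_Xn: "y \<in> Y \<Longrightarrow> \<phi> (lift y) \<in> Xn"
  using lift \<phi>_onto by blast

lemma transfer_map_in_X: "y \<in> Y \<Longrightarrow> near (\<phi> (lift y)) \<in> X"
  using near transfer_lift_image_in_Xn by blast

lemma transfer_map_dist_less:
  assumes "y \<in> Y" "a \<in> X" "x \<in> Xn" "dZ (\<psi> x) (\<kappa> a) < \<epsilon>"
  shows "d (near (\<phi> (lift y))) a < dn (\<phi> (lift y)) x + 2 * \<epsilon>"
  using isometric_embeddings_dist_less(2)[OF ghp_couplingD(1-3)[OF cX] transfer_lift_image_in_Xn[OF assms(1)]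
      assms(3) transfer_map_in_X[OF assms(1)] assms(2) near[OF transfer_lift_image_in_Xn[OF assms(1)], THEN conjunct2]
      assms(4)] .

lemma lift_dist_less:
  assumes "y \<in> Y" "w \<in> Y" "b \<in> Yn" "dZ' (\<alpha> b) (\<beta> w) < \<epsilon>"
  shows "en (lift y) b < e y w + 2 * \<epsilon>"
  using isometric_embeddings_dist_less(1)[OF ghp_couplingD(1-3)[OF cY] _ assms(3,1,2) _ assms(4)]
    lift[OF assms(1)] by blast

lemma transfer_map_dist_less_through:
  assumes "y \<in> Y" "a \<in> X" "b \<in> Yn" "dZ (\<psi> (\<phi> b)) (\<kappa> a) < \<epsilon>" "dZ' (\<alpha> b) (\<beta> y) < \<epsilon>"
  shows "d (near (\<phi> (lift y))) a < 4 * \<epsilon>"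
proof -
  have "d (near (\<phi> (lift y))) a < dn (\<phi> (lift y)) (\<phi> b) + 2 * \<epsilon>"
    using transfer_map_dist_less[OF assms(1,2) _ assms(4)] assms(3) \<phi>_onto by blast
  moreover have "dn (\<phi> (lift y)) (\<phi> b) \<le> en (lift y) b"
    using \<phi>_ne lift[OF assms(1)] assms(3) unfolding nonexpansive_def by blast
  moreover have "en (lift y) b < e y y + 2 * \<epsilon>" using lift_dist_less[OF assms(1,1,3,5)] .
  ultimately show ?thesis using Metric_space.mdist_zero[OF is_mmsD(1)[OF mY]] assms(1) by simp
qed

lemma transfer_map_dist_le:
  assumes "y \<in> Y" "y' \<in> Y"
  shows "d (near (\<phi> (lift y))) (near (\<phi> (lift y'))) \<le> e y y' + 4 * \<epsilon>"
proof -
  have "d (near (\<phi> (lift y))) (near (\<phi> (lift y'))) < dn (\<phi> (lift y)) (\<phi> (lift y')) + 2 * \<epsilon>"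
    using transfer_map_dist_less[OF assms(1) transfer_map_in_X[OF assms(2)] transfer_lift_image_in_Xn[OF assms(2)]]
      near[OF transfer_lift_image_in_Xn[OF assms(2)]] by blast
  moreover have "dn (\<phi> (lift y)) (\<phi> (lift y')) \<le> en (lift y) (lift y')"
    using \<phi>_ne lift assms unfolding nonexpansive_def by blast
  moreover have "en (lift y) (lift y') < e y y' + 2 * \<epsilon>"
    using lift_dist_less[OF assms] lift[OF assms(2)] by blast
  ultimately show ?thesis by simp
qed

lemma transfer_map_almost_onto:
  assumes x: "x \<in> X"
  shows "\<exists>y\<in>Y. d x (near (\<phi> (lift y))) \<le> 4 * \<epsilon>"
proof -
  obtain b where b: "b \<in> Yn" "dZ (\<psi> (\<phi> b)) (\<kappa> x) < \<epsilon>"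
    using ghp_couplingD(5)[OF cX x] \<phi>_onto by blast
  obtain y where y: "y \<in> Y" "dZ' (\<alpha> b) (\<beta> y) < \<epsilon>"
    using ghp_couplingD(4)[OF cY b(1)] by blast
  have "d x (near (\<phi> (lift y))) = d (near (\<phi> (lift y))) x"
    using Metric_space.commute[OF is_mmsD(1)[OF mX]] .
  then show ?thesis using transfer_map_dist_less_through[OF y(1) x b] y by (intro bexI[OF _ y(1)]) simp
qed

lemma transfer_map_closedin_measure:
  assumes F: "closedin (Metric_space.mtopology X d) F"
  shows "\<exists>K\<in>sets \<nu>. K \<subseteq> (near \<circ> \<phi> \<circ> lift) -` nbhd X d F (4 * \<epsilon>) \<inter> Y \<and>
           measure \<mu> F \<le> measure \<nu> K + 4 * \<epsilon>"
proof -
  define G where "G = {x\<in>Xn. \<exists>a\<in>F. dZ (\<psi> x) (\<kappa> a) < \<epsilon>}"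
  define H where "H = \<phi> -` G \<inter> Yn"
  define K where "K = {y\<in>Y. \<exists>b\<in>H. dZ' (\<alpha> b) (\<beta> y) < \<epsilon>}"
  have FX: "F \<subseteq> X"
    using closedin_subset[OF F] Metric_space.topspace_mtopology[OF is_mmsD(1)[OF mX]] by simp
  have G: "G \<in> sets \<mu>n" unfolding G_def by (rule ghp_coupling_near_sets(1)[OF cX mXn FX])
  have "\<phi> \<in> measurable \<nu>n (mborel Xn dn)"
    using measurable_nonexpansive[OF _ _ \<phi>_ne] is_mmsD(1,3,4)[OF mYn] is_mmsD(1)[OF mXn] by blast
  then have H: "H \<in> sets \<nu>n"
    unfolding H_def using measurable_sets[of \<phi> \<nu>n "mborel Xn dn" G] G is_mmsD(3,4)[OF mXn] is_mmsD(3)[OF mYn]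
    by simp
  have K: "K \<in> sets \<nu>" unfolding K_def by (rule ghp_coupling_near_sets(2)[OF cY mY]) (simp add: H_def)
  have "measure \<mu> F \<le> measure \<mu>n G + \<epsilon>"
    using ghp_couplingD(7)[OF cX mborel_measure_closedin[OF is_mmsD(1-4)[OF mX] F]] unfolding G_def .
  also have "measure \<mu>n G \<le> measure \<nu>n H"
    using \<phi>_meas G finite_measure.emeasure_eq_measure[OF is_mmsD(2)[OF mXn]]
      finite_measure.emeasure_eq_measure[OF is_mmsD(2)[OF mYn]] unfolding H_def by simp
  also have "measure \<nu>n H \<le> measure \<nu> K + \<epsilon>" using ghp_couplingD(6)[OF cY H] unfolding K_def .
  finally have "measure \<mu> F \<le> measure \<nu> K + 4 * \<epsilon>" using \<open>0 \<le> \<epsilon>\<close> by simp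
  moreover have "K \<subseteq> (near \<circ> \<phi> \<circ> lift) -` nbhd X d F (4 * \<epsilon>) \<inter> Y"
  proof
    fix y assume "y \<in> K"
    then obtain b a where "y \<in> Y" "b \<in> Yn" "dZ' (\<alpha> b) (\<beta> y) < \<epsilon>" "a \<in> F" "dZ (\<psi> (\<phi> b)) (\<kappa> a) < \<epsilon>"
      unfolding K_def H_def G_def by blast
    then show "y \<in> (near \<circ> \<phi> \<circ> lift) -` nbhd X d F (4 * \<epsilon>) \<inter> Y"
      using transfer_map_dist_less_through[of y a b] transfer_map_in_X[of y] FX unfolding nbhd_def by auto
  qed
  ultimately show ?thesis using K by blast
qed

lemma transfer_map_approx_le_map: "approx_le_map X d \<mu> Y e \<nu> (near \<circ> \<phi> \<circ> lift) (4 * \<epsilon>)"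
  unfolding approx_le_map_def
  using transfer_map_in_X transfer_map_dist_le transfer_map_almost_onto transfer_map_closedin_measure
  by (simp add: Pi_iff)

end

lemma ghp_couplings_mms_le_imp_approx_le_map:
  assumes mX: "is_mms (X, d, \<mu>)" and mY: "is_mms (Y, e, \<nu>)"
    and mXn: "is_mms (Xn, dn, \<mu>n)" and mYn: "is_mms (Yn, en, \<nu>n)"
    and cX: "ghp_coupling Xn dn \<mu>n X d \<mu> Z dZ \<psi> \<kappa> \<epsilon>"
    and cY: "ghp_coupling Yn en \<nu>n Y e \<nu> Z' dZ' \<alpha> \<beta> \<epsilon>"
    and le: "mms_le (Xn, dn, \<mu>n) (Yn, en, \<nu>n)" and "0 \<le> \<epsilon>"
  shows "\<exists>f. approx_le_map X d \<mu> Y e \<nu> f (4 * \<epsilon>)"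
proof -
  obtain \<phi> where \<phi>_onto: "\<phi> ` Yn = Xn" and "\<forall>y\<in>Yn. \<forall>y'\<in>Yn. dn (\<phi> y) (\<phi> y') \<le> en y y'"
    and \<phi>_meas: "\<forall>A\<in>sets \<mu>n. emeasure \<mu>n A \<le> emeasure \<nu>n (\<phi> -` A \<inter> Yn)"
    using le unfolding mms_le_def by auto
  then have \<phi>_ne: "nonexpansive Yn en Xn dn \<phi>" unfolding nonexpansive_def by blast
  obtain lift where lift: "\<And>y. y \<in> Y \<Longrightarrow> lift y \<in> Yn \<and> dZ' (\<alpha> (lift y)) (\<beta> y) < \<epsilon>"
    using bchoice[of Y "\<lambda>y b. b \<in> Yn \<and> dZ' (\<alpha> b) (\<beta> y) < \<epsilon>"] ghp_couplingD(5)[OF cY] by blast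
  obtain near where near: "\<And>x. x \<in> Xn \<Longrightarrow> near x \<in> X \<and> dZ (\<psi> x) (\<kappa> (near x)) < \<epsilon>"
    using bchoice[of Xn "\<lambda>x a. a \<in> X \<and> dZ (\<psi> x) (\<kappa> a) < \<epsilon>"] ghp_couplingD(4)[OF cX] by blast
  have "approx_le_map X d \<mu> Y e \<nu> (near \<circ> \<phi> \<circ> lift) (4 * \<epsilon>)"
    by (rule transfer_map_approx_le_map[OF mX mY mXn mYn cX cY \<phi>_onto \<phi>_ne \<phi>_meas])
      (use lift near \<open>0 \<le> \<epsilon>\<close> in auto)
  then show ?thesis by blast
qed

lemma approx_le_map_of_dGHP_less:
  fixes X Y Xn Yn :: "'a set"
  assumes mX: "is_mms (X, d, \<mu>)" and mY: "is_mms (Y, e, \<nu>)"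
    and mXn: "is_mms (Xn, dn, \<mu>n)" and mYn: "is_mms (Yn, en, \<nu>n)"
    and "dGHP (Xn, dn, \<mu>n) (X, d, \<mu>) < ereal \<epsilon>" "dGHP (Yn, en, \<nu>n) (Y, e, \<nu>) < ereal \<epsilon>"
    and "mms_le (Xn, dn, \<mu>n) (Yn, en, \<nu>n)" and "0 \<le> \<epsilon>"
  shows "\<exists>f. approx_le_map X d \<mu> Y e \<nu> f (4 * \<epsilon>)"
proof -
  obtain Z :: "('a + 'a) set" and dZ \<psi> \<kappa> where "ghp_coupling Xn dn \<mu>n X d \<mu> Z dZ \<psi> \<kappa> \<epsilon>"
    using dGHP_less_imp_ghp_coupling[OF mXn mX assms(5)] by blast
  moreover obtain Z' :: "('a + 'a) set" and dZ' \<alpha> \<beta> where "ghp_coupling Yn en \<nu>n Y e \<nu> Z' dZ' \<alpha> \<beta> \<epsilon>"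
    using dGHP_less_imp_ghp_coupling[OF mYn mY assms(6)] by blast
  ultimately show ?thesis by (rule ghp_couplings_mms_le_imp_approx_le_map[OF mX mY mXn mYn _ _ assms(7,8)])
qed

section \<open>Limits of approximate order witnesses\<close>

lemma compact_space_frequently_cluster:
  assumes "compact_space T" "\<And>n. s n \<in> topspace T"
  shows "\<exists>p\<in>topspace T. \<forall>U. openin T U \<and> p \<in> U \<longrightarrow> (\<exists>\<^sub>F n in sequentially. s n \<in> U)"
proof (rule ccontr)
  assume "\<not> ?thesis"
  then have "\<forall>p\<in>topspace T. \<exists>U. openin T U \<and> p \<in> U \<and> (\<forall>\<^sub>F n in sequentially. s n \<notin> U)"
    by (auto simp: not_frequently)
  then obtain U where U: "\<And>p. p \<in> topspace T \<Longrightarrow> openin T (U p) \<and> p \<in> U p \<and> (\<forall>\<^sub>F n in sequentially. s n \<notin> U p)"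
    by metis
  then have "\<forall>V\<in>U ` topspace T. openin T V" "topspace T \<subseteq> \<Union>(U ` topspace T)" by auto
  then obtain \<F> where \<F>: "finite \<F>" "\<F> \<subseteq> U ` topspace T" "topspace T \<subseteq> \<Union>\<F>"
    using assms(1)[unfolded compact_space_alt] by meson
  obtain P where P: "finite P" "P \<subseteq> topspace T" "\<F> = U ` P"
    using finite_subset_image[OF \<F>(1,2)] by blast
  have "\<forall>\<^sub>F n in sequentially. \<forall>p\<in>P. s n \<notin> U p"
    using P U by (intro eventually_ball_finite) auto
  from eventually_happens'[OF sequentially_bot this] obtain n where "\<forall>p\<in>P. s n \<notin> U p" ..
  then show False using \<F>(3) P(3) assms(2)[of n] by blast
qed

lemma openin_product_topology_finite_dist_less:
  assumes X: "Metric_space X d" and P: "finite P" "P \<subseteq> Y" and \<phi>: "\<phi> \<in> (\<Pi>\<^sub>E y\<in>Y. X)"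
  shows "openin (product_topology (\<lambda>_. Metric_space.mtopology X d) Y)
           {g \<in> (\<Pi>\<^sub>E y\<in>Y. X). \<forall>y\<in>P. d (g y) (\<phi> y) < \<eta>}"
proof -
  interpret Metric_space X d by fact
  define T where "T = product_topology (\<lambda>_. mtopology) Y"
  define V where "V y = {g \<in> topspace T. g y \<in> mball (\<phi> y) \<eta>}" for y
  have "openin T (V y)" if "y \<in> P" for y
    unfolding V_def T_def
    by (rule openin_continuous_map_preimage[OF continuous_map_product_projection]) (use that P in auto)
  then have "openin T ((\<Inter>y\<in>P. V y) \<inter> topspace T)" by (rule openin_INT[OF P(1)])
  moreover have "g y \<in> mball (\<phi> y) \<eta> \<longleftrightarrow> d (g y) (\<phi> y) < \<eta>" if "g \<in> (\<Pi>\<^sub>E y\<in>Y. X)" "y \<in> P" for g y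
    using that \<phi> P commute by (simp add: PiE_iff subset_iff)
  then have "(\<Inter>y\<in>P. V y) \<inter> topspace T = {g \<in> (\<Pi>\<^sub>E y\<in>Y. X). \<forall>y\<in>P. d (g y) (\<phi> y) < \<eta>}"
    unfolding V_def T_def by (simp add: set_eq_iff) blast
  ultimately show ?thesis unfolding T_def by simp
qed

lemma compact_pointwise_cluster_map:
  assumes X: "Metric_space X d" "compact_space (Metric_space.mtopology X d)"
    and f: "\<And>n. f n \<in> Y \<rightarrow> X"
  obtains \<phi> where "\<phi> \<in> Y \<rightarrow> X"
    and "\<And>P \<eta>. finite P \<Longrightarrow> P \<subseteq> Y \<Longrightarrow> \<eta> > 0 \<Longrightarrow>
           \<exists>\<^sub>F n in sequentially. \<forall>y\<in>P. d (f n y) (\<phi> y) < \<eta>"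
proof -
  define T where "T = product_topology (\<lambda>_. Metric_space.mtopology X d) Y"
  have T: "topspace T = (\<Pi>\<^sub>E y\<in>Y. X)" "compact_space T"
    using X unfolding T_def by (simp_all add: Metric_space.topspace_mtopology compact_space_product_topology)
  have "restrict (f n) Y \<in> topspace T" for n using f[of n] T(1) by auto
  then obtain \<phi> where \<phi>: "\<phi> \<in> (\<Pi>\<^sub>E y\<in>Y. X)"
    and cluster: "\<And>V. openin T V \<Longrightarrow> \<phi> \<in> V \<Longrightarrow> \<exists>\<^sub>F n in sequentially. restrict (f n) Y \<in> V"
    using compact_space_frequently_cluster[OF T(2)] T(1) by metis
  have "\<exists>\<^sub>F n in sequentially. \<forall>y\<in>P. d (f n y) (\<phi> y) < \<eta>" if P: "finite P" "P \<subseteq> Y" "\<eta> > 0" for P \<eta>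
  proof -
    have "\<phi> \<in> {g \<in> (\<Pi>\<^sub>E y\<in>Y. X). \<forall>y\<in>P. d (g y) (\<phi> y) < \<eta>}"
      using \<phi> P Metric_space.mdist_zero[OF X(1)] by (auto simp: PiE_iff)
    from cluster[OF _ this]
    have "\<exists>\<^sub>F n in sequentially. restrict (f n) Y \<in> {g \<in> (\<Pi>\<^sub>E y\<in>Y. X). \<forall>y\<in>P. d (g y) (\<phi> y) < \<eta>}"
      using openin_product_topology_finite_dist_less[OF X(1) P(1,2) \<phi>] unfolding T_def by blast
    then show ?thesis by (rule frequently_elim1) (use P(2) in \<open>auto simp: subset_iff\<close>)
  qed
  moreover have "\<phi> \<in> Y \<rightarrow> X" using \<phi> by auto
  ultimately show ?thesis using that by blast
qed

context
  fixes X Y :: "'a set" and d e \<mu> \<nu> and f :: "nat \<Rightarrow> 'a \<Rightarrow> 'a" and \<delta> \<phi>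
  assumes mX: "is_mms (X, d, \<mu>)" and mY: "is_mms (Y, e, \<nu>)"
    and \<delta>: "\<delta> \<longlonglongrightarrow> 0" and approx: "\<And>n. approx_le_map X d \<mu> Y e \<nu> (f n) (\<delta> n)"
    and \<phi>: "\<phi> \<in> Y \<rightarrow> X"
    and cluster: "\<And>P \<eta>. finite P \<Longrightarrow> P \<subseteq> Y \<Longrightarrow> \<eta> > 0 \<Longrightarrow>
                    \<exists>\<^sub>F n in sequentially. \<forall>y\<in>P. d (f n y) (\<phi> y) < \<eta>"
begin

interpretation X: Metric_space X d by (rule is_mmsD(1)[OF mX])
interpretation Y: Metric_space Y e by (rule is_mmsD(1)[OF mY])

lemmas approx_map_in_X = approx_le_mapD(1)[OF approx]
lemmas approx_map_dist_le = approx_le_mapD(2)[OF approx]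
lemmas cluster_map_in_X = funcset_mem[OF \<phi>]

lemma frequently_close_with_small_slack:
  assumes "finite P" "P \<subseteq> Y" "\<eta> > 0"
  shows "\<exists>\<^sub>F n in sequentially. \<delta> n < \<eta> \<and> (\<forall>y\<in>P. d (f n y) (\<phi> y) < \<eta>)"
  using frequently_eventually_conj[OF cluster[OF assms]] order_tendstoD(2)[OF \<delta> \<open>\<eta> > 0\<close>] by simp

lemma cluster_map_nonexpansive: "nonexpansive Y e X d \<phi>"
  unfolding nonexpansive_def
proof (intro conjI ballI \<phi>)
  fix y y' assume y: "y \<in> Y" "y' \<in> Y"
  show "d (\<phi> y) (\<phi> y') \<le> e y y'"
  proof (rule field_le_epsilon)
    fix \<eta> :: real assume "\<eta> > 0"
    then obtain n where n: "\<delta> n < \<eta> / 3" "d (f n y) (\<phi> y) < \<eta> / 3" "d (f n y') (\<phi> y') < \<eta> / 3"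
      using frequently_ex[OF frequently_close_with_small_slack[of "{y, y'}" "\<eta> / 3"]] y \<open>\<eta> > 0\<close> by auto
    have "d (\<phi> y) (\<phi> y') \<le> d (\<phi> y) (f n y) + d (f n y) (f n y') + d (f n y') (\<phi> y')"
      using X.triangle \<phi> y approx_map_in_X by (meson PiE add_right_mono order_trans)
    then show "d (\<phi> y) (\<phi> y') \<le> e y y' + \<eta>"
      using n approx_map_dist_le[OF y, of n] X.commute[of "\<phi> y" "f n y"] by linarith
  qed
qed

lemma cluster_map_uniformly_close:
  assumes "\<eta> > 0"
  obtains n where "\<delta> n < \<eta>" "\<And>y. y \<in> Y \<Longrightarrow> d (f n y) (\<phi> y) < \<eta>"
proof -
  have "compactin Y.mtopology Y" using is_mmsD(5)[OF mY] by (simp add: compact_space_def)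
  then obtain P where P: "finite P" "P \<subseteq> Y" "Y \<subseteq> (\<Union>p\<in>P. Y.mball p (\<eta> / 4))"
    using Y.compactin_imp_mtotally_bounded \<open>\<eta> > 0\<close> unfolding Y.mtotally_bounded_def
    by (meson zero_less_divide_iff zero_less_numeral)
  obtain n where n: "\<delta> n < \<eta> / 4" "\<And>p. p \<in> P \<Longrightarrow> d (f n p) (\<phi> p) < \<eta> / 4"
    using frequently_ex[OF frequently_close_with_small_slack[OF P(1,2), of "\<eta> / 4"]] \<open>\<eta> > 0\<close> by auto
  have "d (f n y) (\<phi> y) < \<eta>" if y: "y \<in> Y" for y
  proof -
    obtain p where p: "p \<in> P" "e p y < \<eta> / 4" using P(3) y by auto
    have pY: "p \<in> Y" using p(1) P(2) by blast
    have "d (f n y) (\<phi> y) \<le> d (f n y) (f n p) + d (f n p) (\<phi> p) + d (\<phi> p) (\<phi> y)"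
      using X.triangle approx_map_in_X cluster_map_in_X y pY by (meson add_right_mono order_trans)
    moreover have "d (f n y) (f n p) \<le> e p y + \<delta> n"
      using approx_map_dist_le[OF y pY, of n] Y.commute[of y p] by simp
    moreover have "d (\<phi> p) (\<phi> y) \<le> e p y"
      using cluster_map_nonexpansive pY y unfolding nonexpansive_def by blast
    ultimately show ?thesis using n(1) n(2)[OF p(1)] p(2) by linarith
  qed
  moreover have "\<delta> n < \<eta>" using n(1) \<open>\<eta> > 0\<close> by linarith
  ultimately show ?thesis using that by blast
qed

lemma cluster_map_onto: "\<phi> ` Y = X"
proof
  show "\<phi> ` Y \<subseteq> X" using \<phi> by blast
  have "compactin Y.mtopology Y" using is_mmsD(5)[OF mY] by (simp add: compact_space_def)
  then have "compactin X.mtopology (\<phi> ` Y)"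
    by (rule image_compactin[OF _ continuous_map_nonexpansive[OF Y.Metric_space_axioms
          X.Metric_space_axioms cluster_map_nonexpansive]])
  then have "openin X.mtopology (X - \<phi> ` Y)"
    using compactin_imp_closedin[OF X.Hausdorff_space_mtopology] by (simp add: closedin_def)
  show "X \<subseteq> \<phi> ` Y"
  proof
    fix x assume x: "x \<in> X"
    show "x \<in> \<phi> ` Y"
    proof (rule ccontr)
      assume "x \<notin> \<phi> ` Y"
      then obtain r where r: "r > 0" "X.mball x r \<subseteq> X - \<phi> ` Y"
        using \<open>openin X.mtopology (X - \<phi> ` Y)\<close> x unfolding X.openin_mtopology by blast
      obtain n where n: "\<delta> n < r / 2" "\<And>y. y \<in> Y \<Longrightarrow> d (f n y) (\<phi> y) < r / 2"
        using cluster_map_uniformly_close[of "r / 2"] r(1) by auto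
      obtain y where y: "y \<in> Y" "d x (f n y) \<le> \<delta> n"
        using approx_le_mapD(3)[OF approx x] by blast
      have "d x (\<phi> y) \<le> d x (f n y) + d (f n y) (\<phi> y)"
        using X.triangle x approx_map_in_X cluster_map_in_X y(1) by blast
      then have "\<phi> y \<in> X.mball x r" using n y x cluster_map_in_X by force
      then show False using r(2) y(1) by blast
    qed
  qed
qed

lemma closedin_measure_le_nbhd_preimage:
  assumes F: "closedin X.mtopology F" and "r > 0"
  shows "measure \<mu> F \<le> measure \<nu> (\<phi> -` nbhd X d F r \<inter> Y) + r"
proof -
  obtain n where n: "\<delta> n < r / 2" "\<And>y. y \<in> Y \<Longrightarrow> d (f n y) (\<phi> y) < r / 2"
    using cluster_map_uniformly_close[of "r / 2"] \<open>r > 0\<close> by auto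
  obtain K where K: "K \<in> sets \<nu>" "K \<subseteq> f n -` nbhd X d F (\<delta> n) \<inter> Y" "measure \<mu> F \<le> measure \<nu> K + \<delta> n"
    using approx_le_mapD(4)[OF approx F] by blast
  have "K \<subseteq> \<phi> -` nbhd X d F r \<inter> Y"
  proof
    fix y assume "y \<in> K"
    then obtain a where y: "y \<in> Y" and a: "a \<in> F" "d (f n y) a < \<delta> n"
      using K(2) unfolding nbhd_def by blast
    have "a \<in> X" using closedin_subset[OF F] a(1) by auto
    then have "d (\<phi> y) a \<le> d (\<phi> y) (f n y) + d (f n y) a"
      using X.triangle approx_map_in_X cluster_map_in_X y by blast
    moreover have "d (\<phi> y) (f n y) < r / 2" using n(2)[OF y] X.commute by simp
    ultimately show "y \<in> \<phi> -` nbhd X d F r \<inter> Y"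
      using a n(1) y cluster_map_in_X unfolding nbhd_def by force
  qed
  moreover have "\<phi> -` nbhd X d F r \<inter> Y \<in> sets \<nu>"
    using closedin_subset[OF F] is_mms_nonexpansive_preimage_nbhd_sets[OF mY
        X.Metric_space_axioms cluster_map_nonexpansive] by simp
  ultimately have "measure \<nu> K \<le> measure \<nu> (\<phi> -` nbhd X d F r \<inter> Y)"
    using finite_measure.finite_measure_mono[OF is_mmsD(2)[OF mY]] by blast
  then show ?thesis using K(3) n(1) \<open>r > 0\<close> by linarith
qed

lemma closedin_measure_le_preimage:
  assumes F: "closedin X.mtopology F"
  shows "measure \<mu> F \<le> measure \<nu> (\<phi> -` F \<inter> Y)"
proof -
  define R where "R k = \<phi> -` nbhd X d F (inverse (real (Suc k))) \<inter> Y" for k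
  have "range R \<subseteq> sets \<nu>"
    using closedin_subset[OF F] is_mms_nonexpansive_preimage_nbhd_sets[OF mY
        X.Metric_space_axioms cluster_map_nonexpansive] unfolding R_def by auto
  moreover have "decseq R"
  proof (rule decseq_SucI)
    fix k
    have "inverse (real (Suc (Suc k))) \<le> inverse (real (Suc k))" by (simp add: field_simps)
    then have "nbhd X d F (inverse (real (Suc (Suc k)))) \<subseteq> nbhd X d F (inverse (real (Suc k)))"
      by (rule nbhd_mono)
    then show "R (Suc k) \<subseteq> R k" unfolding R_def by blast
  qed
  ultimately have "(\<lambda>k. measure \<nu> (R k)) \<longlonglongrightarrow> measure \<nu> (\<Inter>k. R k)"
    by (rule finite_measure.finite_Lim_measure_decseq[OF is_mmsD(2)[OF mY]])
  moreover have "(\<Inter>k. R k) = \<phi> -` F \<inter> Y"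
    using closedin_eq_INT_nbhd[OF X.Metric_space_axioms F] unfolding R_def by blast
  ultimately have "(\<lambda>k. measure \<nu> (R k) + inverse (real (Suc k))) \<longlonglongrightarrow> measure \<nu> (\<phi> -` F \<inter> Y) + 0"
    using LIMSEQ_inverse_real_of_nat by (intro tendsto_add) auto
  moreover have "measure \<mu> F \<le> measure \<nu> (R k) + inverse (real (Suc k))" for k
    unfolding R_def by (rule closedin_measure_le_nbhd_preimage[OF F]) simp
  ultimately show ?thesis using LIMSEQ_le_const by fastforce
qed

lemma cluster_map_mms_le: "mms_le (X, d, \<mu>) (Y, e, \<nu>)"
proof -
  note X = is_mmsD[OF mX] and Y = is_mmsD[OF mY]
  have "\<phi> \<in> measurable \<nu> (mborel X d)"
    using measurable_nonexpansive[OF Y(1) X(1) cluster_map_nonexpansive Y(3,4)] .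
  then have pre_sets: "\<phi> -` A \<inter> Y \<in> sets \<nu>" if "A \<in> sets \<mu>" for A
    using measurable_sets that X(4) Y(3) by fastforce
  have "measure \<mu> A \<le> measure \<nu> (\<phi> -` A \<inter> Y)" if A: "A \<in> sets \<mu>" for A
  proof (rule field_le_epsilon)
    fix \<eta> :: real assume "\<eta> > 0"
    then obtain F where F: "closedin X.mtopology F" "F \<subseteq> A" "measure \<mu> A \<le> measure \<mu> F + \<eta>"
      using closedin_inner_regular[OF X(1-4) A] by blast
    have "measure \<nu> (\<phi> -` F \<inter> Y) \<le> measure \<nu> (\<phi> -` A \<inter> Y)"
      using F(2) pre_sets[OF A] by (intro finite_measure.finite_measure_mono[OF Y(2)]) auto
    then show "measure \<mu> A \<le> measure \<nu> (\<phi> -` A \<inter> Y) + \<eta>"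
      using F(3) closedin_measure_le_preimage[OF F(1)] by linarith
  qed
  then have "emeasure \<mu> A \<le> emeasure \<nu> (\<phi> -` A \<inter> Y)" if "A \<in> sets \<mu>" for A
    using that finite_measure.emeasure_eq_measure[OF X(2)] finite_measure.emeasure_eq_measure[OF Y(2)] by simp
  then show ?thesis
    using cluster_map_onto cluster_map_nonexpansive unfolding mms_le_def nonexpansive_def by auto
qed

end

lemma mms_le_of_approx_le_maps:
  assumes mX: "is_mms (X, d, \<mu>)" and mY: "is_mms (Y, e, \<nu>)"
    and "\<delta> \<longlonglongrightarrow> 0" and approx: "\<And>n. approx_le_map X d \<mu> Y e \<nu> (f n) (\<delta> n)"
  shows "mms_le (X, d, \<mu>) (Y, e, \<nu>)"
proof -
  have f: "\<And>n. f n \<in> Y \<rightarrow> X" using approx by (simp add: approx_le_map_def)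
  obtain \<phi> where "\<phi> \<in> Y \<rightarrow> X" and "\<And>P \<eta>. finite P \<Longrightarrow> P \<subseteq> Y \<Longrightarrow> \<eta> > 0 \<Longrightarrow>
      \<exists>\<^sub>F n in sequentially. \<forall>y\<in>P. d (f n y) (\<phi> y) < \<eta>"
    using compact_pointwise_cluster_map[where f = f, OF is_mmsD(1,5)[OF mX] f] by blast
  then show ?thesis by (rule cluster_map_mms_le[OF mX mY assms(3) approx])
qed

lemma approx_le_map_of_dGHP_tendsto:
  fixes S S' :: "nat \<Rightarrow> 'a mms"
  assumes "\<And>n. is_mms (S n)" "\<And>n. is_mms (S' n)" "is_mms (X, d, \<mu>)" "is_mms (Y, e, \<nu>)"
    and "(\<lambda>n. dGHP (S n) (X, d, \<mu>)) \<longlonglongrightarrow> 0" "(\<lambda>n. dGHP (S' n) (Y, e, \<nu>)) \<longlonglongrightarrow> 0"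
    and "\<And>n. mms_le (S n) (S' n)" and "\<epsilon> > 0"
  shows "\<exists>f. approx_le_map X d \<mu> Y e \<nu> f (4 * \<epsilon>)"
proof -
  have "\<forall>\<^sub>F n in sequentially. dGHP (S n) (X, d, \<mu>) < ereal \<epsilon> \<and> dGHP (S' n) (Y, e, \<nu>) < ereal \<epsilon>"
    using order_tendstoD(2)[OF assms(5)] order_tendstoD(2)[OF assms(6)] \<open>\<epsilon> > 0\<close>
    by (simp add: eventually_conj)
  then obtain n where close: "dGHP (S n) (X, d, \<mu>) < ereal \<epsilon>" "dGHP (S' n) (Y, e, \<nu>) < ereal \<epsilon>"
    using eventually_happens'[OF sequentially_bot] by blast
  obtain Xn dn \<mu>n Yn en \<nu>n where Sn: "S n = (Xn, dn, \<mu>n)" "S' n = (Yn, en, \<nu>n)"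
    by (metis prod_cases3)
  show ?thesis
    using approx_le_map_of_dGHP_less[OF assms(3,4)] assms(1,2,7)[of n] close \<open>\<epsilon> > 0\<close>
    unfolding Sn by simp
qed

theorem proposition3p11:
  fixes S S' :: "nat \<Rightarrow> 'a mms" and Sinf S'inf :: "'a mms"
  assumes "\<And>n. is_mms (S n)" and "\<And>n. is_mms (S' n)"
    and "is_mms Sinf" and "is_mms S'inf"
    and "(\<lambda>n. dGHP (S n) Sinf) \<longlonglongrightarrow> 0"
    and "(\<lambda>n. dGHP (S' n) S'inf) \<longlonglongrightarrow> 0"
    and "\<And>n. mms_le (S n) (S' n)"
  shows "mms_le Sinf S'inf"
proof -
  obtain X d \<mu> Y e \<nu> where Sinf: "Sinf = (X, d, \<mu>)" and S'inf: "S'inf = (Y, e, \<nu>)"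
    by (metis prod_cases3)
  have "\<exists>f. approx_le_map X d \<mu> Y e \<nu> f (4 * inverse (real (Suc k)))" for k
    using approx_le_map_of_dGHP_tendsto[OF assms(1,2)] assms(3-7) unfolding Sinf S'inf by simp
  then obtain f where approx: "\<And>k. approx_le_map X d \<mu> Y e \<nu> (f k) (4 * inverse (real (Suc k)))"
    by metis
  have "(\<lambda>k. 4 * inverse (real (Suc k))) \<longlonglongrightarrow> 0"
    using tendsto_mult_right_zero[OF LIMSEQ_inverse_real_of_nat] .
  from mms_le_of_approx_le_maps[OF _ _ this approx] show ?thesis
    using assms(3,4) unfolding Sinf S'inf .
qed

end
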